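(* Let $A$ be a synaptic algebra, let $p,q\in P$, and define $p_r:=p\wedge(p^{\perp}\vee q)\wedge(p^{\perp}\vee q^{\perp})\in P$. Then: (i) $p=((p\wedge q)\vee(p\wedge q^{\perp}))\oplus p_r=(p\wedge q)\vee(p\wedge q^{\perp})\vee p_r=(p\wedge q)\oplus(p\wedge q^{\perp})\oplus p_r$; (ii) $0\le p_r\le p$ and $p-p_r=(p\wedge q)\vee(p\wedge q^{\perp})$; (iii) $pCq$ iff $p_r=0$.
   Context: Synaptic algebra (Foulis): $R$ is a real linear associative algebra with unit $1$, and $A\subseteq R$ is a real linear subspace with $1\in A$. For $a,b\in A$ write $aCb$ iff $ab=ba$; $C(a):=\{b\in A: aCb\}$; $CC(a):=\{b\in A: bCd \text{ for all } d\in C(a)\}$. $A$ is a synaptic algebra with enveloping algebra $R$ iff: (SA1) $A$ is a partially ordered archimedean real linear space with positive cone $A^+$, $1$ is an order unit, $\|\cdot\|$ the order-unit norm; (SA2) $a\in A\Rightarrow a^2\in A^+$; (SA3) $a,b\in A^+\Rightarrow aba\in A^+$; (SA4) if $a\in A$, $b\in A^+$, $aba=0$ then $ab=ba=0$; (SA5) if $a\in A^+$ there is $b\in A^+\cap CC(a)$ with $b^2=a$; (SA6) for $a\in A$ there is $p=p^2\in A$ with $ab=0\Leftrightarrow pb=0$ for all $b\in A$; (SA7) if $1\le a$ there is $b\in A$ with $ab=ba=1$; (SA8) if $a,b\in A$, $a_1\le a_2\le\cdots$ are pairwise commuting elements of $C(b)$ with $\|a-a_n\|\to0$, then $a\in C(b)$.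 $A$ is nondegenerate ($1\neq 0$). $P:=\{p\in A:p=p^2\}$ with the order inherited from $A$ is an orthomodular lattice with orthocomplement $p^{\perp}:=1-p$, meet $\wedge$, join $\vee$. Projections $p,q$ are orthogonal iff $p\le q^{\perp}$, and then $p\oplus q:=p+q$ (orthosum). *)

theory Defs
  imports "HOL-Analysis.Analysis"
begin

text \<open>A synaptic algebra is given by its enveloping algebra (the type 'r, a real
unital associative algebra), the subspace A, and its positive cone pos.\<close>

definition sle :: "'r::real_algebra_1 set \<Rightarrow> 'r \<Rightarrow> 'r \<Rightarrow> bool" where
  "sle pos a b \<longleftrightarrow> b - a \<in> pos"

definition comm_set :: "'r::real_algebra_1 set \<Rightarrow> 'r \<Rightarrow> 'r set" where
  "comm_set A a = {b \<in> A. a * b = b * a}"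

definition bicomm_set :: "'r::real_algebra_1 set \<Rightarrow> 'r \<Rightarrow> 'r set" where
  "bicomm_set A a = {b \<in> A. \<forall>d \<in> comm_set A a. b * d = d * b}"

definition ou_norm :: "'r::real_algebra_1 set \<Rightarrow> 'r \<Rightarrow> real" where
  "ou_norm pos a = Inf {t. 0 < t \<and> sle pos (- (t *\<^sub>R 1)) a \<and> sle pos a (t *\<^sub>R 1)}"

definition synaptic_algebra :: "'r::real_algebra_1 set \<Rightarrow> 'r set \<Rightarrow> bool" where
  "synaptic_algebra A pos \<longleftrightarrow>
     subspace A \<and> 1 \<in> A \<and> (1::'r) \<noteq> 0 \<and>
     \<comment> \<open>SA1: partially ordered archimedean real linear space, 1 an order unit\<close>
     pos \<subseteq> A \<and>
     (\<forall>a\<in>pos. \<forall>b\<in>pos. a + b \<in> pos) \<and>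
     (\<forall>a\<in>pos. \<forall>t::real. 0 \<le> t \<longrightarrow> t *\<^sub>R a \<in> pos) \<and>
     (\<forall>a\<in>pos. - a \<in> pos \<longrightarrow> a = 0) \<and>
     (\<forall>a\<in>A. \<forall>b\<in>A. (\<forall>n::nat. sle pos (real n *\<^sub>R a) b) \<longrightarrow> sle pos a 0) \<and>
     (\<forall>a\<in>A. \<exists>n::nat. sle pos (- (real n *\<^sub>R 1)) a \<and> sle pos a (real n *\<^sub>R 1)) \<and>
     \<comment> \<open>SA2\<close>
     (\<forall>a\<in>A. a * a \<in> pos) \<and>
     \<comment> \<open>SA3\<close>
     (\<forall>a\<in>pos. \<forall>b\<in>pos. a * b * a \<in> pos) \<and>
     \<comment> \<open>SA4\<close>
     (\<forall>a\<in>A. \<forall>b\<in>pos. a * b * a = 0 \<longrightarrow> a * b = 0 \<and> b * a = 0) \<and>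
     \<comment> \<open>SA5\<close>
     (\<forall>a\<in>pos. \<exists>b\<in>pos. b \<in> bicomm_set A a \<and> b * b = a) \<and>
     \<comment> \<open>SA6\<close>
     (\<forall>a\<in>A. \<exists>p\<in>A. p * p = p \<and> (\<forall>b\<in>A. a * b = 0 \<longleftrightarrow> p * b = 0)) \<and>
     \<comment> \<open>SA7\<close>
     (\<forall>a\<in>A. sle pos 1 a \<longrightarrow> (\<exists>b\<in>A. a * b = 1 \<and> b * a = 1)) \<and>
     \<comment> \<open>SA8\<close>
     (\<forall>a\<in>A. \<forall>b\<in>A. \<forall>f::nat \<Rightarrow> 'r.
        (\<forall>n. f n \<in> comm_set A b) \<and> (\<forall>n. sle pos (f n) (f (Suc n))) \<and>
        (\<forall>m n. f m * f n = f n * f m) \<and>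
        (\<lambda>n. ou_norm pos (a - f n)) \<longlonglongrightarrow> 0
        \<longrightarrow> a \<in> comm_set A b)"

definition proj :: "'r::real_algebra_1 set \<Rightarrow> 'r set" where
  "proj A = {p \<in> A. p * p = p}"

definition pmeet :: "'r::real_algebra_1 set \<Rightarrow> 'r set \<Rightarrow> 'r \<Rightarrow> 'r \<Rightarrow> 'r" where
  "pmeet A pos p q = (THE r. r \<in> proj A \<and> sle pos r p \<and> sle pos r q \<and>
      (\<forall>s\<in>proj A. sle pos s p \<and> sle pos s q \<longrightarrow> sle pos s r))"

definition pjoin :: "'r::real_algebra_1 set \<Rightarrow> 'r set \<Rightarrow> 'r \<Rightarrow> 'r \<Rightarrow> 'r" where
  "pjoin A pos p q = (THE r. r \<in> proj A \<and> sle pos p r \<and> sle pos q r \<and>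
      (\<forall>s\<in>proj A. sle pos p s \<and> sle pos q s \<longrightarrow> sle pos r s))"

definition pperp :: "'r::real_algebra_1 \<Rightarrow> 'r" where
  "pperp p = 1 - p"

text \<open>Orthogonality of projections: p \<le> perp(q); then p \<oplus> q = p + q.\<close>
definition portho :: "'r::real_algebra_1 set \<Rightarrow> 'r \<Rightarrow> 'r \<Rightarrow> bool" where
  "portho pos p q \<longleftrightarrow> sle pos p (pperp q)"

end

theory Submission
  imports Defs
begin

text \<open>Write \<open>a = p \<and> q\<close> and \<open>b = p \<and> q\<^sup>\<perp>\<close>. Since \<open>a \<le> q\<close> and \<open>b \<le> q\<^sup>\<perp>\<close>, the
  projections \<open>a\<close> and \<open>b\<close> are orthogonal, so \<open>a \<or> b = a + b\<close>. By De Morgan,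
  \<open>p\<^sup>\<perp> \<or> q = 1 - b\<close> and \<open>p\<^sup>\<perp> \<or> q\<^sup>\<perp> = 1 - a\<close>; as \<open>b \<le> p\<close> and \<open>a \<le> p\<close> the meets
  defining \<open>p\<^sub>r\<close> are meets of commuting projections, i.e. products, and collapse to
  \<open>p\<^sub>r = p - a - b\<close>. All parts of the theorem then follow from the orthogonality
  relations between \<open>a\<close>, \<open>b\<close> and \<open>p\<^sub>r\<close>; in particular \<open>p\<^sub>r = 0\<close> iff \<open>p = a + b\<close>,
  which forces \<open>p q = a = q p\<close>, while conversely \<open>p q = q p\<close> gives \<open>a = p q\<close>
  and \<open>b = p (1 - q)\<close>.\<close>

locale synaptic =
  fixes A pos :: "'r::real_algebra_1 set"
  assumes synaptic: "synaptic_algebra A pos"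
begin

lemma subspace: "subspace A"
  using synaptic unfolding synaptic_algebra_def by (elim conjE)

lemma one_in: "1 \<in> A"
  using synaptic unfolding synaptic_algebra_def by (elim conjE)

lemma pos_subset: "pos \<subseteq> A"
  using synaptic unfolding synaptic_algebra_def by (elim conjE)

lemma pos_antisym [rule_format]: "\<forall>x\<in>pos. - x \<in> pos \<longrightarrow> x = 0"
  using synaptic unfolding synaptic_algebra_def by (elim conjE)

lemma square_pos [rule_format]: "\<forall>a\<in>A. a * a \<in> pos"
  using synaptic unfolding synaptic_algebra_def by (elim conjE)

lemma sandwich_pos [rule_format]: "\<forall>a\<in>pos. \<forall>b\<in>pos. a * b * a \<in> pos"
  using synaptic unfolding synaptic_algebra_def by (elim conjE)

lemma sandwich_eq_zero [rule_format]: "\<forall>a\<in>A. \<forall>b\<in>pos. a * b * a = 0 \<longrightarrow> a * b = 0 \<and> b * a = 0"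
  using synaptic unfolding synaptic_algebra_def by (elim conjE)

lemma annihilator_proj [rule_format]: "\<forall>a\<in>A. \<exists>p\<in>A. p * p = p \<and> (\<forall>b\<in>A. a * b = 0 \<longleftrightarrow> p * b = 0)"
  using synaptic unfolding synaptic_algebra_def by (elim conjE)

lemma diff_in: "x \<in> A \<Longrightarrow> y \<in> A \<Longrightarrow> x - y \<in> A"
  and add_in: "x \<in> A \<Longrightarrow> y \<in> A \<Longrightarrow> x + y \<in> A"
  and scaleR_in: "x \<in> A \<Longrightarrow> c *\<^sub>R x \<in> A"
  using subspace by (auto intro: subspace_diff subspace_add subspace_scale)

lemma sle_antisym: "sle pos x y \<Longrightarrow> sle pos y x \<Longrightarrow> x = y"
  unfolding sle_def using pos_antisym[of "y - x"] by simp

lemma sle_one_minus_iff: "sle pos (1 - x) (1 - y) \<longleftrightarrow> sle pos y x"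
  unfolding sle_def by (simp add: algebra_simps)

lemma projD: "p \<in> proj A \<Longrightarrow> p \<in> A \<and> p * p = p"
  unfolding proj_def by blast

lemma proj_in_pos: "p \<in> proj A \<Longrightarrow> p \<in> pos"
  using projD square_pos by metis

lemma one_minus_proj: "p \<in> proj A \<Longrightarrow> 1 - p \<in> proj A"
  unfolding proj_def using one_in diff_in by (auto simp: algebra_simps)

lemma proj_le_iff:
  assumes hp: "p \<in> proj A" and hs: "s \<in> proj A"
  shows "sle pos p s \<longleftrightarrow> p * s = p \<and> s * p = p"
proof
  assume "sle pos p s"
  then have "(1 - s) * (s - p) * (1 - s) \<in> pos"
    using sandwich_pos proj_in_pos one_minus_proj hs unfolding sle_def by blast
  moreover have "(1 - s) * (s - p) * (1 - s) = - ((1 - s) * p * (1 - s))"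
    using projD[OF hs] by (simp add: algebra_simps)
  moreover have "(1 - s) * p * (1 - s) \<in> pos"
    using sandwich_pos proj_in_pos one_minus_proj hs hp by blast
  ultimately have "(1 - s) * p * (1 - s) = 0"
    using pos_antisym by metis
  then have "(1 - s) * p = 0 \<and> p * (1 - s) = 0"
    using sandwich_eq_zero one_in diff_in projD proj_in_pos hp hs by blast
  then show "p * s = p \<and> s * p = p"
    by (simp add: algebra_simps)
next
  assume "p * s = p \<and> s * p = p"
  then have "(s - p) * (s - p) = s - p"
    using projD hp hs by (simp add: algebra_simps)
  then show "sle pos p s"
    unfolding sle_def using square_pos diff_in projD hp hs by metis
qed

lemma proj_mult_eq_zero_commute:
  assumes "p \<in> proj A" and "s \<in> proj A" and "p * s = 0"
  shows "s * p = 0"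
proof -
  have "s * p * s = 0"
    using \<open>p * s = 0\<close> by (simp add: mult.assoc)
  then show ?thesis
    using sandwich_eq_zero projD proj_in_pos assms by blast
qed

lemma portho_iff_mult_eq_zero:
  assumes "p \<in> proj A" and "s \<in> proj A"
  shows "portho pos p s \<longleftrightarrow> p * s = 0"
  unfolding portho_def pperp_def
  using proj_le_iff[OF assms(1) one_minus_proj[OF assms(2)]] proj_mult_eq_zero_commute assms
  by (auto simp: algebra_simps)

lemma proj_mult_eq_zero_of_le_of_le_perp:
  assumes "x \<in> proj A" "y \<in> proj A" "q \<in> proj A"
    and "sle pos x q" and "sle pos y (1 - q)"
  shows "x * y = 0"
proof -
  have "x * q = x" "y * q = 0"
    using assms proj_le_iff one_minus_proj by (auto simp: algebra_simps)
  then have "x * y = x * q * y"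
    by simp
  also have "\<dots> = 0"
    using proj_mult_eq_zero_commute[OF assms(2,3) \<open>y * q = 0\<close>] by (simp add: mult.assoc)
  finally show ?thesis .
qed

lemma proj_diff_of_le:
  assumes hs: "s \<in> proj A" and hp: "p \<in> proj A" and le: "sle pos s p"
  shows "p - s \<in> proj A" and "s * (p - s) = 0"
proof -
  have "s * p = s" "p * s = s"
    using proj_le_iff hs hp le by blast+
  then show "p - s \<in> proj A" "s * (p - s) = 0"
    using projD hs hp diff_in unfolding proj_def by (auto simp: algebra_simps)
qed

definition is_proj_join :: "'r \<Rightarrow> 'r \<Rightarrow> 'r \<Rightarrow> bool" where
  "is_proj_join p q r \<longleftrightarrow> r \<in> proj A \<and> sle pos p r \<and> sle pos q r \<and>
      (\<forall>s\<in>proj A. sle pos p s \<and> sle pos q s \<longrightarrow> sle pos r s)"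

definition is_proj_meet :: "'r \<Rightarrow> 'r \<Rightarrow> 'r \<Rightarrow> bool" where
  "is_proj_meet p q r \<longleftrightarrow> r \<in> proj A \<and> sle pos r p \<and> sle pos r q \<and>
      (\<forall>s\<in>proj A. sle pos s p \<and> sle pos s q \<longrightarrow> sle pos s r)"

lemma pjoin_eqI: "is_proj_join p q r \<Longrightarrow> pjoin A pos p q = r"
  unfolding pjoin_def by (rule the_equality) (auto simp: is_proj_join_def intro: sle_antisym)

lemma pmeet_eqI: "is_proj_meet p q r \<Longrightarrow> pmeet A pos p q = r"
  unfolding pmeet_def by (rule the_equality) (auto simp: is_proj_meet_def intro: sle_antisym)

text \<open>The join of \<open>p\<close> and \<open>q\<close> is the projection \<open>c\<close> provided by SA6 for \<open>p + q\<close>: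
  \<open>c\<close> and \<open>p + q\<close> annihilate the same elements, and for a projection \<open>s\<close> above
  both \<open>p\<close> and \<open>q\<close>, \<open>p + q\<close> annihilates \<open>1 - s\<close>.\<close>

lemma proj_join_exists:
  assumes hp: "p \<in> proj A" and hq: "q \<in> proj A"
  shows "\<exists>c. is_proj_join p q c"
proof -
  obtain c where c: "c \<in> A" "c * c = c"
    and ann: "\<And>b. b \<in> A \<Longrightarrow> (p + q) * b = 0 \<longleftrightarrow> c * b = 0"
    using annihilator_proj[of "p + q"] add_in projD hp hq by blast
  have hc: "c \<in> proj A" and hc': "1 - c \<in> proj A"
    using c one_minus_proj unfolding proj_def by auto
  have le_c: "sle pos x c" if hx: "x \<in> proj A" and "(1 - c) * x * (1 - c) = 0" for x
    using sandwich_eq_zero[OF projD[OF hc', THEN conjunct1] proj_in_pos[OF hx]] that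
      proj_le_iff[OF hx hc] by (simp add: algebra_simps)
  have "c * (1 - c) = 0"
    using c by (simp add: algebra_simps)
  then have "(1 - c) * (p + q) * (1 - c) = 0"
    using ann[of "1 - c"] diff_in one_in c by (simp add: mult.assoc)
  then have "(1 - c) * p * (1 - c) + (1 - c) * q * (1 - c) = 0"
    by (simp add: algebra_simps)
  moreover have "(1 - c) * p * (1 - c) \<in> pos" "(1 - c) * q * (1 - c) \<in> pos"
    using sandwich_pos proj_in_pos hc' hp hq by blast+
  ultimately have "(1 - c) * p * (1 - c) = 0" "(1 - c) * q * (1 - c) = 0"
    using pos_antisym add_eq_0_iff add.commute by metis+
  then have "sle pos p c" "sle pos q c"
    using le_c hp hq by blast+
  moreover have "sle pos c s" if hs: "s \<in> proj A" and "sle pos p s" "sle pos q s" for s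
  proof -
    have "(p + q) * (1 - s) = 0"
      using that proj_le_iff hp hq by (auto simp: algebra_simps)
    then have cs: "c * (1 - s) = 0"
      using ann one_in diff_in projD hs by blast
    then have "(1 - s) * c = 0"
      using proj_mult_eq_zero_commute hc one_minus_proj hs by blast
    with cs show ?thesis
      using proj_le_iff[OF hc hs] by (simp add: algebra_simps)
  qed
  ultimately show ?thesis
    unfolding is_proj_join_def using hc by blast
qed

lemma Ball_proj_one_minus: "(\<forall>s\<in>proj A. P s) \<longleftrightarrow> (\<forall>s\<in>proj A. P (1 - s))"
proof
  assume "\<forall>s\<in>proj A. P (1 - s)"
  then have "P (1 - (1 - s))" if "s \<in> proj A" for s
    using one_minus_proj that by blast
  then show "\<forall>s\<in>proj A. P s"
    by simp
qed (simp add: one_minus_proj)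

lemma is_proj_meet_iff_is_proj_join_one_minus:
  assumes "p \<in> proj A" "q \<in> proj A" "r \<in> proj A"
  shows "is_proj_meet p q r \<longleftrightarrow> is_proj_join (1 - p) (1 - q) (1 - r)"
proof -
  have "(\<forall>s\<in>proj A. sle pos (1 - p) s \<and> sle pos (1 - q) s \<longrightarrow> sle pos (1 - r) s)
      \<longleftrightarrow> (\<forall>s\<in>proj A. sle pos s p \<and> sle pos s q \<longrightarrow> sle pos s r)"
    using Ball_proj_one_minus[of "\<lambda>s. sle pos (1 - p) s \<and> sle pos (1 - q) s \<longrightarrow> sle pos (1 - r) s"]
    by (simp add: sle_one_minus_iff)
  then show ?thesis
    unfolding is_proj_meet_def is_proj_join_def using assms one_minus_proj
    by (simp add: sle_one_minus_iff)
qed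

lemma is_proj_meet_pmeet:
  assumes "p \<in> proj A" "q \<in> proj A"
  shows "is_proj_meet p q (pmeet A pos p q)"
proof -
  obtain j where j: "is_proj_join (1 - p) (1 - q) j"
    using proj_join_exists one_minus_proj assms by blast
  then have "j \<in> proj A"
    unfolding is_proj_join_def by blast
  with j have "is_proj_meet p q (1 - j)"
    using is_proj_meet_iff_is_proj_join_one_minus[of p q "1 - j"] one_minus_proj assms by simp
  then show ?thesis
    using pmeet_eqI by simp
qed

lemma pmeet_proj: "p \<in> proj A \<Longrightarrow> q \<in> proj A \<Longrightarrow> pmeet A pos p q \<in> proj A"
  and pmeet_le_left: "p \<in> proj A \<Longrightarrow> q \<in> proj A \<Longrightarrow> sle pos (pmeet A pos p q) p"
  and pmeet_le_right: "p \<in> proj A \<Longrightarrow> q \<in> proj A \<Longrightarrow> sle pos (pmeet A pos p q) q"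
  using is_proj_meet_pmeet unfolding is_proj_meet_def by blast+

lemma pjoin_pperp_pperp:
  assumes "p \<in> proj A" "q \<in> proj A"
  shows "pjoin A pos (pperp p) (pperp q) = 1 - pmeet A pos p q"
  using is_proj_meet_iff_is_proj_join_one_minus[OF assms pmeet_proj[OF assms]]
    is_proj_meet_pmeet[OF assms] pjoin_eqI
  unfolding pperp_def by blast

lemma pmeet_eq_mult_if_commute:
  assumes hp: "p \<in> proj A" and hs: "s \<in> proj A" and c: "p * s = s * p"
  shows "pmeet A pos p s = p * s"
proof (rule pmeet_eqI)
  have "(p - s) * (p - s) = p + s - 2 *\<^sub>R (p * s)"
    using projD hp hs c by (simp add: algebra_simps scaleR_2)
  then have "p * s = (1/2) *\<^sub>R (p + s - (p - s) * (p - s))"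
    by simp
  then have "p * s \<in> A"
    using scaleR_in diff_in add_in projD square_pos pos_subset hp hs by (metis subsetD)
  moreover have "p * s * (p * s) = p * s"
    using projD hp hs c by (metis mult.assoc)
  ultimately have hr: "p * s \<in> proj A"
    unfolding proj_def by blast
  have "t * (p * s) = t \<and> p * s * t = t"
    if "t \<in> proj A" "sle pos t p" "sle pos t s" for t
    using that proj_le_iff hp hs by (metis mult.assoc)
  moreover have "p * s * p = p * s" "p * (p * s) = p * s" "p * s * s = p * s" "s * (p * s) = p * s"
    using projD hp hs c by (metis mult.assoc)+
  ultimately show "is_proj_meet p s (p * s)"
    unfolding is_proj_meet_def using proj_le_iff hr hp hs by auto
qed

lemma pjoin_eq_add_if_orthogonal:
  assumes ha: "a \<in> proj A" and hb: "b \<in> proj A" and o: "a * b = 0"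
  shows "pjoin A pos a b = a + b" and "a + b \<in> proj A"
proof -
  have o': "b * a = 0"
    using proj_mult_eq_zero_commute[OF ha hb o] .
  show hr: "a + b \<in> proj A"
    using projD ha hb o o' add_in unfolding proj_def by (auto simp: algebra_simps)
  have "sle pos (a + b) s" if "s \<in> proj A" "sle pos a s" "sle pos b s" for s
    using that proj_le_iff hr ha hb by (auto simp: algebra_simps)
  then have "is_proj_join a b (a + b)"
    unfolding is_proj_join_def using hr ha hb o o' proj_le_iff projD
    by (auto simp: algebra_simps)
  then show "pjoin A pos a b = a + b"
    by (rule pjoin_eqI)
qed

lemma pmeet_mult_pmeet_pperp_eq_zero:
  assumes "p \<in> proj A" "q \<in> proj A"
  shows "pmeet A pos p q * pmeet A pos p (pperp q) = 0"
proof -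
  have "1 - q \<in> proj A"
    using one_minus_proj assms(2) .
  then show ?thesis
    unfolding pperp_def using assms
    by (intro proj_mult_eq_zero_of_le_of_le_perp[where q = q] pmeet_proj pmeet_le_right)
qed

lemma residue_eq_diff_pmeets:
  assumes hp: "p \<in> proj A" and hq: "q \<in> proj A"
  defines "a \<equiv> pmeet A pos p q" and "b \<equiv> pmeet A pos p (pperp q)"
  shows "pmeet A pos (pmeet A pos p (pjoin A pos (pperp p) q)) (pjoin A pos (pperp p) (pperp q))
         = p - (a + b)"
proof -
  have hq': "pperp q \<in> proj A"
    using one_minus_proj hq unfolding pperp_def .
  have ha: "a \<in> proj A" "sle pos a p" and hb: "b \<in> proj A" "sle pos b p"
    unfolding a_def b_def using pmeet_proj pmeet_le_left hp hq hq' by simp_all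
  have pa: "a * p = a" "p * a = a" and pb: "b * p = b" "p * b = b"
    using proj_le_iff[OF ha(1) hp] proj_le_iff[OF hb(1) hp] ha(2) hb(2) by simp_all
  have ab: "a * b = 0"
    using pmeet_mult_pmeet_pperp_eq_zero[OF hp hq] unfolding a_def b_def .
  then have ba: "b * a = 0"
    using proj_mult_eq_zero_commute[OF ha(1) hb(1)] by simp
  have "pjoin A pos (pperp p) q = 1 - b"
    using pjoin_pperp_pperp[OF hp hq'] unfolding b_def pperp_def by simp
  moreover have "pmeet A pos p (1 - b) = p - b"
    using pmeet_eq_mult_if_commute[OF hp one_minus_proj[OF hb(1)]] pb by (simp add: algebra_simps)
  moreover have "p - b \<in> proj A"
    using proj_diff_of_le(1)[OF hb(1) hp hb(2)] .
  moreover have "pmeet A pos (p - b) (1 - a) = p - (a + b)"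
    using pmeet_eq_mult_if_commute[OF \<open>p - b \<in> proj A\<close> one_minus_proj[OF ha(1)]] pa ab ba
    by (simp add: algebra_simps)
  ultimately show ?thesis
    using pjoin_pperp_pperp[OF hp hq] unfolding a_def by simp
qed

lemma proj_commute_iff_eq_pmeet_add_pmeet:
  assumes hp: "p \<in> proj A" and hq: "q \<in> proj A"
  shows "p * q = q * p \<longleftrightarrow> p = pmeet A pos p q + pmeet A pos p (pperp q)"
proof
  assume c: "p * q = q * p"
  then have "p * (1 - q) = (1 - q) * p"
    by (simp add: algebra_simps)
  then show "p = pmeet A pos p q + pmeet A pos p (pperp q)"
    using pmeet_eq_mult_if_commute hp hq one_minus_proj c unfolding pperp_def
    by (simp add: algebra_simps)
next
  define a b where "a = pmeet A pos p q" and "b = pmeet A pos p (pperp q)"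
  have hq': "pperp q \<in> proj A"
    using one_minus_proj hq unfolding pperp_def .
  have "a * q = a" "q * a = a"
    unfolding a_def using pmeet_le_right proj_le_iff pmeet_proj hp hq by blast+
  moreover have "b * q = 0" "q * b = 0"
    using pmeet_le_right[OF hp hq'] proj_le_iff pmeet_proj[OF hp hq'] hq'
    unfolding b_def pperp_def by (auto simp: algebra_simps)
  moreover assume "p = pmeet A pos p q + pmeet A pos p (pperp q)"
  ultimately show "p * q = q * p"
    unfolding a_def[symmetric] b_def[symmetric] by (simp add: algebra_simps)
qed

end

theorem theorem2p2:
  fixes A pos :: "'r::real_algebra_1 set" and p q pr :: 'r
  assumes SA: "synaptic_algebra A pos"
    and hp: "p \<in> proj A" and hq: "q \<in> proj A"
    and pr_def: "pr = pmeet A pos (pmeet A pos p (pjoin A pos (pperp p) q))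
                                  (pjoin A pos (pperp p) (pperp q))"
  shows "pr \<in> proj A
    \<and> \<comment> \<open>(i)\<close>
      portho pos (pjoin A pos (pmeet A pos p q) (pmeet A pos p (pperp q))) pr
    \<and> p = pjoin A pos (pmeet A pos p q) (pmeet A pos p (pperp q)) + pr
    \<and> p = pjoin A pos (pjoin A pos (pmeet A pos p q) (pmeet A pos p (pperp q))) pr
    \<and> portho pos (pmeet A pos p q) (pmeet A pos p (pperp q))
    \<and> portho pos (pmeet A pos p q + pmeet A pos p (pperp q)) pr
    \<and> p = pmeet A pos p q + pmeet A pos p (pperp q) + pr
    \<and> \<comment> \<open>(ii)\<close>
      sle pos 0 pr \<and> sle pos pr p
    \<and> p - pr = pjoin A pos (pmeet A pos p q) (pmeet A pos p (pperp q))
    \<and> \<comment> \<open>(iii)\<close>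
      (p * q = q * p \<longleftrightarrow> pr = 0)"
proof -
  interpret synaptic A pos
    using SA by unfold_locales
  define a b where "a = pmeet A pos p q" and "b = pmeet A pos p (pperp q)"
  have hq': "pperp q \<in> proj A"
    using one_minus_proj hq unfolding pperp_def .
  have ha: "a \<in> proj A" and hb: "b \<in> proj A" and ab: "a * b = 0"
    unfolding a_def b_def using pmeet_proj pmeet_mult_pmeet_pperp_eq_zero hp hq hq' by blast+
  have hab: "a + b \<in> proj A" and join_ab: "pjoin A pos a b = a + b"
    using pjoin_eq_add_if_orthogonal[OF ha hb ab] by auto
  have "a * p = a \<and> p * a = a" "b * p = b \<and> p * b = b"
    unfolding a_def b_def using pmeet_le_left pmeet_proj proj_le_iff hp hq hq' by blast+
  then have "sle pos (a + b) p"
    using proj_le_iff[OF hab hp] by (simp add: algebra_simps)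
  moreover have pr: "pr = p - (a + b)"
    using residue_eq_diff_pmeets[OF hp hq] pr_def unfolding a_def b_def by simp
  ultimately have hpr: "pr \<in> proj A" and o: "(a + b) * pr = 0"
    using proj_diff_of_le[OF hab hp] by auto
  have "p * q = q * p \<longleftrightarrow> pr = 0"
    using proj_commute_iff_eq_pmeet_add_pmeet[OF hp hq] pr unfolding a_def b_def by auto
  moreover have "p - pr = a + b"
    using pr by simp
  then have "sle pos 0 pr" "sle pos pr p"
    unfolding sle_def using proj_in_pos hpr hab by simp_all
  moreover have "portho pos a b" "portho pos (a + b) pr"
    using portho_iff_mult_eq_zero ha hb hab hpr ab o by simp_all
  moreover have "pjoin A pos (a + b) pr = p"
    using pjoin_eq_add_if_orthogonal(1)[OF hab hpr o] pr by simp
  ultimately show ?thesis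
    using hpr pr join_ab unfolding a_def[symmetric] b_def[symmetric] by auto
qed

end
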